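(* Let $p_{l_n}$ be a probability density function on $[0,\infty)$ (the normalized square-radius density), and let $F_{l_n}(\tau)=\int_0^{\tau}p_{l_n}(x)\,dx$ denote its cumulative distribution function. For a positive integer $N$ and $\beta>0$ define $$P_e(N,\beta)=\int_0^\infty\left[1-\frac{1}{\Gamma(N/2)}\,\gamma\!\left(\frac{N}{2},\frac{N\beta x}{2}\right)\right]p_{l_n}(x)\,dx .$$ Let $\tau=1/\beta$ and $P_e^a(\tau)=\lim_{N\to\infty}P_e(N,\beta)$. Then $$P_e^a(\tau)=\lim_{N\to\infty}P_e(N,\beta)=\int_0^{1/\beta}p_{l_n}(x)\,dx=\int_0^{\tau}p_{l_n}(x)\,dx=F_{l_n}(\tau).$$
   Context: $\Gamma$ is the gamma function and $\gamma(\alpha,x)=\int_0^x e^{-t}t^{\alpha-1}\,dt$ (for $\alpha>0$) is the lower incomplete gamma function. The quantity $P_e(N,\beta)$ is the word error rate of a length-$N$ binary linear block code with BPSK in AWGN at SNR $\beta=2E_s/N_0$, where $p_{l_n}$ is the density of the square radius of the decision region (in the direction of the noise) normalized by $NE_s$; the density $p_{l_n}$ is held fixed as $N\to\infty$. *)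

theory Defs
  imports "HOL-Analysis.Analysis"
begin

definition lower_inc_gamma :: "real \<Rightarrow> real \<Rightarrow> real" where
  "lower_inc_gamma a x = (LINT t:{0..x}|lborel. exp (- t) * t powr (a - 1))"

definition sqr_cdf :: "(real \<Rightarrow> real) \<Rightarrow> real \<Rightarrow> real" where
  "sqr_cdf p \<tau> = (LINT x:{0..\<tau>}|lborel. p x)"

definition word_error_rate :: "(real \<Rightarrow> real) \<Rightarrow> nat \<Rightarrow> real \<Rightarrow> real" where
  "word_error_rate p N \<beta> =
     (LINT x:{0..}|lborel.
        (1 - lower_inc_gamma (real N / 2) (real N * \<beta> * x / 2) / Gamma (real N / 2)) * p x)"

end

theory Submission imports Defs begin

text \<open>The Gamma(a,1) law has mean a and variance a, so by Chebyshev's inequality the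
regularized lower incomplete gamma function P(a, a y) deviates from the indicator of y > 1
by at most 1/(a (y-1)^2). For the word error rate the integrand is therefore
1 - P(N/2, (N/2) \<beta> x) \<rightarrow> [x < 1/\<beta>] for every x \<noteq> 1/\<beta>; it is bounded by p,
and dominated convergence gives the limit F(1/\<beta>).\<close>

definition gamma_kernel :: "real \<Rightarrow> real \<Rightarrow> real" where
  "gamma_kernel a t = indicator {0..} t * t powr (a - 1) / exp t"

definition reg_lower_gamma :: "real \<Rightarrow> real \<Rightarrow> real" where
  "reg_lower_gamma a x = lower_inc_gamma a x / Gamma a"

lemma gamma_kernel_measurable [measurable]: "gamma_kernel a \<in> borel_measurable lborel"
  unfolding gamma_kernel_def by measurable

lemma gamma_kernel_nonneg: "gamma_kernel a t \<ge> 0"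
  unfolding gamma_kernel_def by (auto simp: indicator_def)

lemma gamma_kernel_plus1: "gamma_kernel (a + 1) t = t * gamma_kernel a t"
proof (cases "t > 0")
  case True
  then have "t powr a = t * t powr (a - 1)" by (simp add: powr_mult_base)
  with True show ?thesis by (auto simp: gamma_kernel_def indicator_def)
qed (auto simp: gamma_kernel_def indicator_def)

lemma
  assumes "a > 0"
  shows integrable_gamma_kernel: "integrable lborel (gamma_kernel a)"
    and integral_gamma_kernel: "integral\<^sup>L lborel (gamma_kernel a) = Gamma a"
proof -
  have "(\<integral>\<^sup>+t. gamma_kernel a t \<partial>lborel) = ennreal (Gamma a)"
    using Gamma_conv_nn_integral_real[OF assms] by (simp add: gamma_kernel_def)
  then have "integrable lborel (gamma_kernel a) \<and> integral\<^sup>L lborel (gamma_kernel a) = Gamma a"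
    using Gamma_real_pos[OF assms]
    by (subst (asm) nn_integral_eq_integrable) (auto simp: gamma_kernel_nonneg)
  then show "integrable lborel (gamma_kernel a)" "integral\<^sup>L lborel (gamma_kernel a) = Gamma a"
    by auto
qed

lemma
  assumes "a > 0"
  shows integrable_gamma_kernel_variance: "integrable lborel (\<lambda>t. (t - a)^2 * gamma_kernel a t)"
    and integral_gamma_kernel_variance:
      "integral\<^sup>L lborel (\<lambda>t. (t - a)^2 * gamma_kernel a t) = a * Gamma a"
proof -
  have expand: "(t - a)^2 * gamma_kernel a t =
      gamma_kernel (a + 1 + 1) t - 2 * a * gamma_kernel (a + 1) t + a^2 * gamma_kernel a t" for t
    using gamma_kernel_plus1[of "a + 1" t] gamma_kernel_plus1[of a t]
    by (simp add: power2_eq_square algebra_simps)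
  have int: "integrable lborel (gamma_kernel b)" if "b \<in> {a, a + 1, a + 1 + 1}" for b
    using that assms by (intro integrable_gamma_kernel) auto
  show "integrable lborel (\<lambda>t. (t - a)^2 * gamma_kernel a t)"
    unfolding expand using int by auto
  have Gamma_plus1': "Gamma (b + 1) = b * Gamma b" if "b > 0" for b :: real
    using that by (intro Gamma_plus1) (auto elim!: nonpos_Ints_cases)
  have "integral\<^sup>L lborel (\<lambda>t. (t - a)^2 * gamma_kernel a t)
      = Gamma (a + 1 + 1) - 2 * a * Gamma (a + 1) + a^2 * Gamma a"
    unfolding expand using int assms by (simp add: integral_gamma_kernel)
  also have "\<dots> = a * Gamma a"
    using assms Gamma_plus1'[of a] Gamma_plus1'[of "a + 1"] by (simp add: power2_eq_square algebra_simps)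
  finally show "integral\<^sup>L lborel (\<lambda>t. (t - a)^2 * gamma_kernel a t) = a * Gamma a" .
qed

lemma integrable_indicator_gamma_kernel:
  assumes "a > 0" "A \<in> sets borel"
  shows "integrable lborel (\<lambda>t. indicator A t * gamma_kernel a t)"
  using integrable_mult_indicator[of A lborel "gamma_kernel a"] integrable_gamma_kernel[OF assms(1)]
    assms(2)
  by simp

lemma gamma_kernel_chebyshev:
  assumes "a > 0" "c > 0" "A \<in> sets borel" "\<And>t. t \<in> A \<Longrightarrow> c \<le> \<bar>t - a\<bar>"
  shows "integral\<^sup>L lborel (\<lambda>t. indicator A t * gamma_kernel a t) \<le> a * Gamma a / c^2"
proof -
  have "integral\<^sup>L lborel (\<lambda>t. indicator A t * gamma_kernel a t)
      \<le> integral\<^sup>L lborel (\<lambda>t. (t - a)^2 * gamma_kernel a t / c^2)"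
  proof (intro integral_mono integrable_divide integrable_gamma_kernel_variance assms)
    show "integrable lborel (\<lambda>t. indicator A t * gamma_kernel a t)"
      using assms by (intro integrable_indicator_gamma_kernel)
    fix t
    have "1 \<le> (t - a)^2 / c^2" if "t \<in> A"
    proof -
      have "c^2 \<le> (t - a)^2"
        using assms(2) assms(4)[OF that] by (metis abs_ge_zero power2_abs power_mono less_imp_le)
      then show ?thesis using assms(2) by simp
    qed
    then show "indicator A t * gamma_kernel a t \<le> (t - a)^2 * gamma_kernel a t / c^2"
      using mult_right_mono[OF _ gamma_kernel_nonneg, of 1 "(t - a)^2 / c^2" a t]
      by (cases "t \<in> A") (simp_all add: gamma_kernel_nonneg)
  qed
  also have "\<dots> = a * Gamma a / c^2"
    using integral_gamma_kernel_variance[OF assms(1)] by simp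
  finally show ?thesis .
qed

lemma lower_inc_gamma_eq_integral_gamma_kernel:
  "lower_inc_gamma a x = integral\<^sup>L lborel (\<lambda>t. indicator {..x} t * gamma_kernel a t)"
  unfolding lower_inc_gamma_def set_lebesgue_integral_def gamma_kernel_def
  by (intro Bochner_Integration.integral_cong) (auto simp: indicator_def exp_minus field_simps)

lemma lower_inc_gamma_nonneg: "lower_inc_gamma a x \<ge> 0"
  unfolding lower_inc_gamma_eq_integral_gamma_kernel
  by (intro integral_nonneg_AE) (auto simp: gamma_kernel_nonneg)

lemma lower_inc_gamma_mono:
  assumes "a > 0" "x \<le> x'"
  shows "lower_inc_gamma a x \<le> lower_inc_gamma a x'"
  unfolding lower_inc_gamma_eq_integral_gamma_kernel using assms
  by (intro integral_mono integrable_indicator_gamma_kernel)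
     (auto simp: indicator_def gamma_kernel_nonneg)

lemma Gamma_minus_lower_inc_gamma:
  assumes "a > 0"
  shows "Gamma a - lower_inc_gamma a x =
    integral\<^sup>L lborel (\<lambda>t. indicator {x<..} t * gamma_kernel a t)"
proof -
  have "Gamma a - lower_inc_gamma a x =
      integral\<^sup>L lborel (\<lambda>t. gamma_kernel a t - indicator {..x} t * gamma_kernel a t)"
    unfolding lower_inc_gamma_eq_integral_gamma_kernel integral_gamma_kernel[OF assms, symmetric]
    using assms by (simp add: integrable_indicator_gamma_kernel integrable_gamma_kernel)
  also have "\<dots> = integral\<^sup>L lborel (\<lambda>t. indicator {x<..} t * gamma_kernel a t)"
    by (intro Bochner_Integration.integral_cong) (auto simp: indicator_def)
  finally show ?thesis .
qed

lemma lower_inc_gamma_le_Gamma: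
  assumes "a > 0"
  shows "lower_inc_gamma a x \<le> Gamma a"
proof -
  have "0 \<le> integral\<^sup>L lborel (\<lambda>t. indicator {x<..} t * gamma_kernel a t)"
    by (intro integral_nonneg_AE) (auto simp: gamma_kernel_nonneg)
  then show ?thesis using Gamma_minus_lower_inc_gamma[OF assms, of x] by simp
qed

lemma reg_lower_gamma_nonneg:
  assumes "a \<ge> 0"
  shows "reg_lower_gamma a x \<ge> 0"
  using assms unfolding reg_lower_gamma_def
  by (cases "a = 0") (auto intro!: divide_nonneg_nonneg lower_inc_gamma_nonneg Gamma_real_nonneg)

lemma reg_lower_gamma_le_1:
  assumes "a \<ge> 0"
  shows "reg_lower_gamma a x \<le> 1"
proof (cases "a = 0")
  case False
  with assms have "a > 0" by simp
  then show ?thesis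
    by (simp add: reg_lower_gamma_def divide_le_eq_1 lower_inc_gamma_le_Gamma)
qed (simp add: reg_lower_gamma_def)

lemma borel_measurable_reg_lower_gamma:
  assumes "a \<ge> 0"
  shows "reg_lower_gamma a \<in> borel_measurable borel"
proof (cases "a = 0")
  case False
  with assms have "mono (lower_inc_gamma a)"
    by (intro monoI lower_inc_gamma_mono) auto
  then have "lower_inc_gamma a \<in> borel_measurable borel"
    by (rule borel_measurable_mono)
  then show ?thesis unfolding reg_lower_gamma_def by simp
qed (simp add: reg_lower_gamma_def[abs_def])

lemma reg_lower_gamma_below_mean:
  assumes "a > 0" "y < 1"
  shows "reg_lower_gamma a (a * y) \<le> 1 / (1 - y)^2 / a"
proof -
  have "lower_inc_gamma a (a * y) \<le> a * Gamma a / (a * (1 - y))^2"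
    unfolding lower_inc_gamma_eq_integral_gamma_kernel using assms
    by (intro gamma_kernel_chebyshev) (auto simp: algebra_simps mult_left_mono)
  also have "\<dots> = Gamma a * (1 / (1 - y)^2 / a)"
    using assms by (simp add: power_mult_distrib power2_eq_square)
  finally show ?thesis
    using Gamma_real_pos[OF assms(1)] by (simp add: reg_lower_gamma_def divide_le_eq mult.commute)
qed

lemma reg_lower_gamma_above_mean:
  assumes "a > 0" "y > 1"
  shows "1 - 1 / (y - 1)^2 / a \<le> reg_lower_gamma a (a * y)"
proof -
  have "Gamma a - lower_inc_gamma a (a * y) \<le> a * Gamma a / (a * (y - 1))^2"
    unfolding Gamma_minus_lower_inc_gamma[OF assms(1)] using assms
    by (intro gamma_kernel_chebyshev) (auto simp: algebra_simps)
  also have "\<dots> = Gamma a * (1 / (y - 1)^2 / a)"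
    using assms by (simp add: power_mult_distrib power2_eq_square)
  finally show ?thesis
    using Gamma_real_pos[OF assms(1)] by (simp add: reg_lower_gamma_def field_simps)
qed

lemma tendsto_const_over_at_top: "((\<lambda>a::real. C / a) \<longlongrightarrow> 0) at_top"
  using tendsto_mult_right_zero[OF tendsto_inverse_0_at_top[OF filterlim_ident], of C]
  by (simp add: divide_inverse)

lemma tendsto_reg_lower_gamma_below_mean:
  assumes "y < 1"
  shows "((\<lambda>a. reg_lower_gamma a (a * y)) \<longlongrightarrow> 0) at_top"
proof (rule tendsto_sandwich)
  show "\<forall>\<^sub>F a in at_top. 0 \<le> reg_lower_gamma a (a * y)"
    using eventually_ge_at_top[of 0] by eventually_elim (rule reg_lower_gamma_nonneg)
  show "\<forall>\<^sub>F a in at_top. reg_lower_gamma a (a * y) \<le> 1 / (1 - y)^2 / a"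
    using eventually_gt_at_top[of 0] by eventually_elim (rule reg_lower_gamma_below_mean[OF _ assms])
  show "((\<lambda>a. 1 / (1 - y)^2 / a) \<longlongrightarrow> 0) at_top"
    by (rule tendsto_const_over_at_top)
qed simp

lemma tendsto_reg_lower_gamma_above_mean:
  assumes "y > 1"
  shows "((\<lambda>a. reg_lower_gamma a (a * y)) \<longlongrightarrow> 1) at_top"
proof (rule tendsto_sandwich)
  show "\<forall>\<^sub>F a in at_top. 1 - 1 / (y - 1)^2 / a \<le> reg_lower_gamma a (a * y)"
    using eventually_gt_at_top[of 0] by eventually_elim (rule reg_lower_gamma_above_mean[OF _ assms])
  show "\<forall>\<^sub>F a in at_top. reg_lower_gamma a (a * y) \<le> 1"
    using eventually_ge_at_top[of 0] by eventually_elim (rule reg_lower_gamma_le_1)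
  show "((\<lambda>a. 1 - 1 / (y - 1)^2 / a) \<longlongrightarrow> 1) at_top"
    using tendsto_diff[OF tendsto_const tendsto_const_over_at_top, of 1 "1 / (y - 1)^2"]
    by simp
qed simp

lemma tendsto_one_minus_reg_lower_gamma_half:
  assumes "\<beta> > 0" "x \<noteq> 1 / \<beta>"
  shows "(\<lambda>N. 1 - reg_lower_gamma (real N / 2) (real N / 2 * (\<beta> * x)))
           \<longlonglongrightarrow> indicator {..1/\<beta>} x"
proof -
  have "filterlim (\<lambda>N. 1 / 2 * real N) at_top sequentially"
    by (intro filterlim_tendsto_pos_mult_at_top[OF tendsto_const] filterlim_real_sequentially) simp
  then have half: "filterlim (\<lambda>N. real N / 2) at_top sequentially"
    by simp
  show ?thesis
  proof (cases "x < 1 / \<beta>")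
    case True
    then have "\<beta> * x < 1" using assms by (simp add: field_simps)
    from filterlim_compose[OF tendsto_reg_lower_gamma_below_mean[OF this] half]
    have "(\<lambda>N. reg_lower_gamma (real N / 2) (real N / 2 * (\<beta> * x))) \<longlonglongrightarrow> 0"
      by simp
    moreover have "indicator {..1/\<beta>} x = 1 - (0::real)" using True by simp
    ultimately show ?thesis by (metis tendsto_diff[OF tendsto_const])
  next
    case False
    then have "\<beta> * x > 1" using assms by (simp add: field_simps)
    from filterlim_compose[OF tendsto_reg_lower_gamma_above_mean[OF this] half]
    have "(\<lambda>N. reg_lower_gamma (real N / 2) (real N / 2 * (\<beta> * x))) \<longlonglongrightarrow> 1"
      by simp
    moreover have "indicator {..1/\<beta>} x = 1 - (1::real)" using False assms(2) by simp
    ultimately show ?thesis by (metis tendsto_diff[OF tendsto_const])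
  qed
qed

lemma tendsto_set_integral_bounded_weights:
  fixes p :: "real \<Rightarrow> real"
  assumes p: "set_integrable lborel S p" and S: "S \<in> sets borel"
    and f_meas: "\<And>N. f N \<in> borel_measurable borel" and g_meas: "g \<in> borel_measurable borel"
    and f_bound: "\<And>N x. x \<in> S \<Longrightarrow> \<bar>f N x\<bar> \<le> 1"
    and f_lim: "AE x in lborel. x \<in> S \<longrightarrow> (\<lambda>N. f N x) \<longlonglongrightarrow> g x"
  shows "(\<lambda>N. LINT x:S|lborel. f N x * p x) \<longlonglongrightarrow> (LINT x:S|lborel. g x * p x)"
proof -
  have p_meas: "(\<lambda>x. indicator S x * p x) \<in> borel_measurable lborel"
    using p by (simp add: set_integrable_def)
  have "(\<lambda>N. integral\<^sup>L lborel (\<lambda>x. f N x * (indicator S x * p x)))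
      \<longlonglongrightarrow> integral\<^sup>L lborel (\<lambda>x. g x * (indicator S x * p x))"
  proof (rule integral_dominated_convergence[where w="\<lambda>x. \<bar>indicator S x * p x\<bar>"])
    show "integrable lborel (\<lambda>x. \<bar>indicator S x * p x\<bar>)"
      using p by (simp add: set_integrable_def)
    show "AE x in lborel. norm (f N x * (indicator S x * p x)) \<le> \<bar>indicator S x * p x\<bar>" for N
      using f_bound by (auto simp: indicator_def abs_mult intro!: mult_left_le_one_le)
    show "AE x in lborel. (\<lambda>N. f N x * (indicator S x * p x)) \<longlonglongrightarrow> g x * (indicator S x * p x)"
      using f_lim by eventually_elim (auto simp: indicator_def intro: tendsto_mult_right)
  qed (use p_meas f_meas g_meas in \<open>auto intro!: borel_measurable_times\<close>)
  then show ?thesis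
    unfolding set_lebesgue_integral_def by (simp add: ac_simps)
qed

lemma word_error_rate_eq:
  "word_error_rate p N \<beta> =
    (LINT x:{0..}|lborel. (1 - reg_lower_gamma (real N / 2) (real N / 2 * (\<beta> * x))) * p x)"
  unfolding word_error_rate_def reg_lower_gamma_def by (simp add: ac_simps)

theorem mainTheorem1:
  fixes p :: "real \<Rightarrow> real" and \<beta> :: real
  assumes p_meas: "p \<in> borel_measurable lborel"
    and p_nonneg: "\<And>x. x \<ge> 0 \<Longrightarrow> p x \<ge> 0"
    and p_int: "set_integrable lborel {0..} p"
    and p_total: "(LINT x:{0..}|lborel. p x) = 1"
    and beta_pos: "\<beta> > 0"
  shows "(\<lambda>N. word_error_rate p N \<beta>) \<longlonglongrightarrow> (LINT x:{0..1/\<beta>}|lborel. p x)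
         \<and> (LINT x:{0..1/\<beta>}|lborel. p x) = sqr_cdf p (1/\<beta>)"
proof
  have "(\<lambda>N. LINT x:{0..}|lborel. (1 - reg_lower_gamma (real N / 2) (real N / 2 * (\<beta> * x))) * p x)
      \<longlonglongrightarrow> (LINT x:{0..}|lborel. indicator {..1/\<beta>} x * p x)"
  proof (rule tendsto_set_integral_bounded_weights[OF p_int])
    show "(\<lambda>x. 1 - reg_lower_gamma (real N / 2) (real N / 2 * (\<beta> * x))) \<in> borel_measurable borel" for N
      using measurable_compose[OF _ borel_measurable_reg_lower_gamma[of "real N / 2"]] by measurable
    show "\<bar>1 - reg_lower_gamma (real N / 2) (real N / 2 * (\<beta> * x))\<bar> \<le> 1" for N x
      using reg_lower_gamma_nonneg reg_lower_gamma_le_1 by (simp add: abs_le_iff)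
    show "AE x in lborel. x \<in> {0..} \<longrightarrow>
        (\<lambda>N. 1 - reg_lower_gamma (real N / 2) (real N / 2 * (\<beta> * x))) \<longlonglongrightarrow> indicator {..1/\<beta>} x"
      using AE_lborel_singleton[of "1/\<beta>"]
      by eventually_elim (use tendsto_one_minus_reg_lower_gamma_half beta_pos in auto)
  qed auto
  moreover have "(LINT x:{0..}|lborel. indicator {..1/\<beta>} x * p x) = (LINT x:{0..1/\<beta>}|lborel. p x)"
    unfolding set_lebesgue_integral_def
    by (intro Bochner_Integration.integral_cong) (auto simp: indicator_def)
  ultimately show "(\<lambda>N. word_error_rate p N \<beta>) \<longlonglongrightarrow> (LINT x:{0..1/\<beta>}|lborel. p x)"
    by (simp only: word_error_rate_eq)
qed (simp add: sqr_cdf_def)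

end
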